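(* Suppose $\frac1{\sqrt5}<a<\frac{\sqrt{105}-5}{10}$. Then for all integers $n\ge2$, \[ (3a-5a^3+2a^{2n+1})n+3a^{2n+1}-3a\ge0 \] and \[ (-3+30a^2-35a^4+8a^{2n+2})n^2+(3-35a^4+32a^{2n+2})n+30a^{2n+2}-30a^2\ge0. \] *)

theory Defs
  imports Complex_Main
begin

end

theory Submission
  imports Defs
begin

text \<open>Write \<open>x = a\<^sup>2\<close> and \<open>t = a^(2n) \<ge> 0\<close>. The hypotheses give \<open>1/5 < x < 7/25\<close>.
  Every term involving \<open>t\<close> enters with a nonnegative coefficient and can be dropped, and
  the remaining coefficients of \<open>n\<close> and \<open>n\<^sup>2\<close> are nonnegative on that interval, so it suffices
  to check \<open>n = 2\<close>, where the expressions become \<open>a (3 - 10x)\<close> and \<open>-6 + 90x - 210x\<^sup>2\<close>,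
  both positive for \<open>1/5 < x < 7/25\<close>.\<close>

lemma lemma4p4_range_square_bounds:
  fixes a :: real
  assumes "1 / sqrt 5 < a" and "a < (sqrt 105 - 5) / 10"
  shows "0 < a" and "1/5 < a^2" and "a^2 < 7/25"
proof -
  have "0 < 1 / sqrt 5"
    by simp
  with assms(1) show a_pos: "0 < a"
    by linarith
  have "1 < a * sqrt 5"
    using assms(1) by (simp add: divide_less_eq mult.commute)
  then have "1 < (a * sqrt 5)^2"
    by (simp add: one_less_power)
  then show "1/5 < a^2"
    by (simp add: power_mult_distrib)
  have "sqrt 105 < 10.25"
    by (rule real_less_lsqrt) (auto simp: power2_eq_square)
  with assms(2) have "a < 0.525"
    by simp
  then have "a^2 < 0.525^2"
    using a_pos by (intro power_strict_mono) auto
  then show "a^2 < 7/25"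
    by (simp add: power2_eq_square)
qed

lemma first_inequality_reduced:
  fixes x t N :: real
  assumes "x \<le> 3/10" and "0 \<le> t" and "2 \<le> N"
  shows "(3 - 5*x + 2*t) * N + 3*t - 3 \<ge> 0"
proof -
  have "(3 - 5*x + 2*t) * N + 3*t - 3 = (3 - 5*x) * (N - 2) + (3 - 10*x) + t * (2*N + 3)"
    by (simp add: algebra_simps)
  also have "\<dots> \<ge> 0"
    using assms by (intro add_nonneg_nonneg mult_nonneg_nonneg) auto
  finally show ?thesis .
qed

lemma second_inequality_reduced:
  fixes x t N :: real
  assumes "1/5 \<le> x" and "x \<le> 7/25" and "0 \<le> t" and "2 \<le> N"
  shows "(-3 + 30*x - 35*x^2 + 8*x*t) * N^2 + (3 - 35*x^2 + 32*x*t) * N + 30*x*t - 30*x \<ge> 0"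
proof -
  have "0 \<le> (x - 1/5) * (7/25 - x)"
    using assms(1,2) by simp
  also have "\<dots> = 12/25*x - 7/125 - x^2"
    by (simp add: field_simps power2_eq_square)
  finally have quadratic_bound: "x^2 \<le> 12/25*x - 7/125"
    by simp
  have "N^2 \<ge> 2^2"
    using assms(4) by (intro power_mono) auto
  have "(-3 + 30*x - 35*x^2 + 8*x*t) * N^2 + (3 - 35*x^2 + 32*x*t) * N + 30*x*t - 30*x
      = (-3 + 30*x - 35*x^2) * (N^2 - 4) + (3 - 35*x^2) * (N - 2) + x*t*(8*N^2 + 32*N + 30)
        + (-6 + 90*x - 210*x^2)"
    by (simp add: algebra_simps)
  also have "\<dots> \<ge> 0"
    using quadratic_bound assms \<open>N^2 \<ge> 2^2\<close> by (intro add_nonneg_nonneg mult_nonneg_nonneg) auto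
  finally show ?thesis .
qed

theorem lemma4p4:
  fixes a :: real and n :: nat
  assumes "1 / sqrt 5 < a" and "a < (sqrt 105 - 5) / 10" and "n \<ge> 2"
  shows "(3*a - 5*a^3 + 2*a^(2*n+1)) * real n + 3*a^(2*n+1) - 3*a \<ge> 0 \<and>
         (-3 + 30*a^2 - 35*a^4 + 8*a^(2*n+2)) * (real n)^2
          + (3 - 35*a^4 + 32*a^(2*n+2)) * real n + 30*a^(2*n+2) - 30*a^2 \<ge> 0"
proof -
  note bounds = lemma4p4_range_square_bounds[OF assms(1,2)]
  define t where "t = a^(2*n)"
  have t_nonneg: "0 \<le> t" and n_ge_2: "2 \<le> real n"
    using assms(3) by (auto simp: t_def)
  have powers_t: "a^(2*n+1) = a * t" "a^(2*n+2) = a^2 * t"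
    unfolding t_def power_add by simp_all
  have powers_square: "a^3 = a * a^2" "a^4 = (a^2)^2"
    by (simp_all add: numeral_eq_Suc mult_ac)
  have "(3*a - 5*a^3 + 2*a^(2*n+1)) * real n + 3*a^(2*n+1) - 3*a
          = a * ((3 - 5*a^2 + 2*t) * real n + 3*t - 3)"
    unfolding powers_t powers_square by (simp add: algebra_simps)
  also have "\<dots> \<ge> 0"
    using bounds t_nonneg n_ge_2 by (intro mult_nonneg_nonneg first_inequality_reduced) auto
  finally have first: "(3*a - 5*a^3 + 2*a^(2*n+1)) * real n + 3*a^(2*n+1) - 3*a \<ge> 0" .
  have "(-3 + 30*a^2 - 35*(a^2)^2 + 8*a^2*t) * (real n)^2
          + (3 - 35*(a^2)^2 + 32*a^2*t) * real n + 30*a^2*t - 30*a^2 \<ge> 0"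
    using bounds t_nonneg n_ge_2 by (intro second_inequality_reduced) auto
  then have second: "(-3 + 30*a^2 - 35*a^4 + 8*a^(2*n+2)) * (real n)^2
          + (3 - 35*a^4 + 32*a^(2*n+2)) * real n + 30*a^(2*n+2) - 30*a^2 \<ge> 0"
    unfolding powers_t powers_square by (simp only: mult.assoc)
  show ?thesis
    using first second ..
qed

end
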